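(* Let $f(z)=z+\sum_{n=2}^{\infty}a_nz^n$ belong to $\mathcal{S}^*_{ch}$, and let $\Gamma_1=-\frac12a_2$ and $\Gamma_2=-\frac12\big(a_3-\frac32a_2^2\big)$ be its first two logarithmic inverse coefficients. Then $$-\frac{1}{\sqrt{10}}\le |\Gamma_2|-|\Gamma_1|\le\frac14.$$ Both inequalities are sharp (each bound is attained by some function in $\mathcal{S}^*_{ch}$).
   Context: $\mathbb{D}=\{z\in\mathbb{C}:|z|<1\}$. $\mathcal{A}$ is the class of analytic $f$ on $\mathbb{D}$ with $f(0)=0$, $f'(0)=1$. For analytic $g,h$ on $\mathbb{D}$, $g\prec h$ means there is an analytic $\omega$ on $\mathbb{D}$ with $\omega(0)=0$, $|\omega(z)|<1$, and $g=h\circ\omega$. $\mathcal{S}^*_{ch}$ is the class of $f\in\mathcal{A}$ with $\frac{zf'(z)}{f(z)}\prec z+\cosh z$ on $\mathbb{D}$. Logarithmic inverse coefficients $\Gamma_n$ are defined by $\log\frac{f^{-1}(w)}{w}=2\sum_{n\ge1}\Gamma_nw^n$ for $w$ near $0$. *)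

theory Defs
  imports "HOL-Analysis.Analysis"
begin

definition subord :: "(complex \<Rightarrow> complex) \<Rightarrow> (complex \<Rightarrow> complex) \<Rightarrow> bool" where
  "subord g h \<longleftrightarrow> (\<exists>\<omega>. \<omega> holomorphic_on ball 0 1 \<and> \<omega> 0 = 0 \<and>
      (\<forall>z\<in>ball 0 1. norm (\<omega> z) < 1) \<and> (\<forall>z\<in>ball 0 1. g z = h (\<omega> z)))"

definition classA :: "(complex \<Rightarrow> complex) set" where
  "classA = {f. f holomorphic_on ball 0 1 \<and> f 0 = 0 \<and> deriv f 0 = 1}"

definition zdlog :: "(complex \<Rightarrow> complex) \<Rightarrow> complex \<Rightarrow> complex" where
  "zdlog f z = (if z = 0 then 1 else z * deriv f z / f z)"

text \<open>The class S*_ch: f in A with z f'/f (analytic on the disc, so f has no zeros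
  in the punctured disc) subordinate to z + cosh z.\<close>
definition Sch :: "(complex \<Rightarrow> complex) set" where
  "Sch = {f \<in> classA. (\<forall>z\<in>ball 0 1. z \<noteq> 0 \<longrightarrow> f z \<noteq> 0) \<and>
            subord (zdlog f) (\<lambda>z. z + cosh z)}"

definition coef :: "(complex \<Rightarrow> complex) \<Rightarrow> nat \<Rightarrow> complex" where
  "coef f n = (deriv ^^ n) f 0 / of_nat (fact n)"

definition Gamma1 :: "(complex \<Rightarrow> complex) \<Rightarrow> complex" where
  "Gamma1 f = - (1/2) * coef f 2"

definition Gamma2 :: "(complex \<Rightarrow> complex) \<Rightarrow> complex" where
  "Gamma2 f = - (1/2) * (coef f 3 - (3/2) * (coef f 2)^2)"

end

theory Submission
  imports Defs "HOL-Complex_Analysis.Complex_Analysis"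
begin

unbundle no vec_syntax

text \<open>Every \<open>f \<in> S*\<^sub>c\<^sub>h\<close> comes from a Schwarz function \<open>\<omega>(z) = c\<^sub>1 z + c\<^sub>2 z\<^sup>2 + \<dots>\<close> through
  \<open>z f'/f = \<phi> \<circ> \<omega>\<close> with \<open>\<phi>(z) = z + cosh z\<close>, and conversely every Schwarz function arises
  this way, from \<open>f(z) = z exp \<integral>\<^sub>0\<^sup>z (\<phi>(\<omega>(t)) - 1)/t dt\<close>. Comparing coefficients in
  \<open>z f' = f \<cdot> (\<phi> \<circ> \<omega>)\<close> gives \<open>a\<^sub>2 = c\<^sub>1\<close> and \<open>a\<^sub>3 = c\<^sub>2/2 + 3c\<^sub>1\<^sup>2/4\<close>, hence
  \<open>\<Gamma>\<^sub>1 = -c\<^sub>1/2\<close> and \<open>\<Gamma>\<^sub>2 = (3c\<^sub>1\<^sup>2 - 2c\<^sub>2)/8\<close>. The Schwarz--Pick inequality at 0 for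
  \<open>\<omega>(z)/z\<close> gives \<open>|c\<^sub>2| \<le> 1 - |c\<^sub>1|\<^sup>2\<close>, which turns both bounds into elementary
  inequalities in \<open>x = |c\<^sub>1| \<in> [0,1]\<close>. Equality is attained for \<open>\<omega>(z) = z\<^sup>2\<close> and for
  \<open>\<omega>(z) = z (z + a)/(1 + a z)\<close> with \<open>a = sqrt (2/5)\<close>.\<close>

definition schwarz_function :: "(complex \<Rightarrow> complex) \<Rightarrow> bool" where
  "schwarz_function \<omega> \<longleftrightarrow>
     \<omega> holomorphic_on ball 0 1 \<and> \<omega> 0 = 0 \<and> (\<forall>z\<in>ball 0 1. norm (\<omega> z) < 1)"

lemma has_fps_expansion_unique:
  fixes F G :: "complex fps"
  assumes "f has_fps_expansion F" "f has_fps_expansion G"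
  shows "F = G"
  using assms by (simp add: fps_eq_iff fps_nth_fps_expansion)

lemma coef_eq_fps_nth: "f has_fps_expansion F \<Longrightarrow> coef f n = F $ n"
  by (simp add: coef_def fps_nth_fps_expansion)

lemma has_fps_expansion_ball_cong:
  fixes f g :: "complex \<Rightarrow> complex"
  assumes "f has_fps_expansion F" "r > 0" "\<And>z. z \<in> ball 0 r \<Longrightarrow> f z = g z"
  shows "g has_fps_expansion F"
proof -
  have "eventually (\<lambda>z. z \<in> ball 0 r) (nhds 0)"
    using \<open>r > 0\<close> by (intro eventually_nhds_in_open) auto
  then have "eventually (\<lambda>z. f z = g z) (nhds 0)"
    by (rule eventually_mono) (use assms(3) in blast)
  with assms(1) show ?thesis
    using has_fps_expansion_cong by blast
qed

lemma coef_0: "coef f 0 = f 0"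
  by (simp add: coef_def)

lemma coef_Suc_0: "coef f (Suc 0) = deriv f 0"
  by (simp add: coef_def)

lemma coef_Suc_times_z:
  assumes "\<psi> holomorphic_on ball 0 r" "r > 0" "\<And>z. z \<in> ball 0 r \<Longrightarrow> \<omega> z = z * \<psi> z"
  shows "coef \<omega> (Suc n) = coef \<psi> n"
proof -
  have \<Psi>: "\<psi> has_fps_expansion fps_expansion \<psi> 0"
    using assms(1,2) by (intro has_fps_expansion_fps_expansion) auto
  then have "(\<lambda>z. z * \<psi> z) has_fps_expansion fps_X * fps_expansion \<psi> 0"
    by (intro fps_expansion_intros)
  then have "\<omega> has_fps_expansion fps_X * fps_expansion \<psi> 0"
    by (rule has_fps_expansion_ball_cong[OF _ \<open>r > 0\<close>]) (simp add: assms(3))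
  then show ?thesis
    using coef_eq_fps_nth[OF \<Psi>] coef_eq_fps_nth by simp
qed

lemma Schwarz_Pick_deriv_0:
  assumes holg: "g holomorphic_on ball 0 1" and g_lt_1: "\<And>z. z \<in> ball 0 1 \<Longrightarrow> norm (g z) < 1"
  shows "norm (deriv g 0) \<le> 1 - norm (g 0) ^ 2"
proof -
  define a where "a = g 0"
  have a_lt_1: "norm a < 1"
    using g_lt_1[of 0] by (simp add: a_def)
  define h where "h = Moebius_function 0 a \<circ> g"
  have holh: "h holomorphic_on ball 0 1"
    unfolding h_def using holg Moebius_function_holomorphic[OF a_lt_1] g_lt_1
    by (intro holomorphic_on_compose_gen) auto
  have h_lt_1: "norm (h z) < 1" if "norm z < 1" for z
    using that g_lt_1 a_lt_1 by (simp add: h_def Moebius_function_norm_lt_1)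
  have "h 0 = 0"
    by (simp add: h_def a_def Moebius_function_eq_zero)
  then have "norm (deriv h 0) \<le> 1"
    using Schwarz_Lemma(2)[OF holh _ h_lt_1, of 0] by simp
  have den_pos: "1 - norm a ^ 2 > 0"
    using a_lt_1 by (simp add: abs_square_less_1)
  have den: "1 - cnj a * a = of_real (1 - norm a ^ 2)"
    using complex_norm_square[of a] by (simp add: mult.commute)
  have den_ne_0: "1 - cnj a * a \<noteq> 0"
    unfolding den of_real_eq_0_iff using den_pos by linarith
  have g0: "g 0 = a"
    by (simp add: a_def)
  have "(g has_field_derivative deriv g 0) (at 0)"
    using holg by (intro holomorphic_derivI[of _ "ball 0 1"]) auto
  then have "(h has_field_derivative
        (deriv g 0 * (1 - cnj a * g 0) - (g 0 - a) * (- cnj a * deriv g 0))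
          / ((1 - cnj a * g 0) * (1 - cnj a * g 0))) (at 0)"
    unfolding h_def o_def Moebius_function_simple
    using den_ne_0 by (auto intro!: derivative_eq_intros simp: g0)
  then have "deriv h 0 = deriv g 0 / (1 - cnj a * a)"
    using den_ne_0 by (auto dest!: DERIV_imp_deriv simp: g0)
  moreover have "norm (1 - cnj a * a) = 1 - norm a ^ 2"
    unfolding den using den_pos by (simp only: norm_of_real abs_of_pos)
  ultimately show ?thesis
    using \<open>norm (deriv h 0) \<le> 1\<close> den_pos by (simp add: g0 norm_divide divide_le_eq)
qed

lemma schwarz_function_coef_2_bound:
  assumes "schwarz_function \<omega>"
  shows "norm (coef \<omega> 2) \<le> 1 - norm (coef \<omega> 1) ^ 2"
proof -
  from assms have hol: "\<omega> holomorphic_on ball 0 1" and \<omega>0: "\<omega> 0 = 0"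
    and \<omega>_lt_1: "\<And>z. norm z < 1 \<Longrightarrow> norm (\<omega> z) < 1"
    by (auto simp: schwarz_function_def)
  note Schwarz = Schwarz_Lemma[OF hol \<omega>0 \<omega>_lt_1]
  show ?thesis
  proof (cases "\<exists>\<alpha>. (\<forall>z. norm z < 1 \<longrightarrow> \<omega> z = \<alpha> * z) \<and> norm \<alpha> = 1")
    case True
    then obtain \<alpha> where "\<And>z. z \<in> ball 0 1 \<Longrightarrow> \<omega> z = z * \<alpha>" "norm \<alpha> = 1"
      by (auto simp: mult.commute)
    then have coef_shift: "coef \<omega> (Suc n) = coef (\<lambda>_. \<alpha>) n" for n
      by (intro coef_Suc_times_z[of _ 1]) auto
    from coef_shift[of 0] coef_shift[of 1] \<open>norm \<alpha> = 1\<close> show ?thesis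
      by (simp add: numeral_2_eq_2 coef_0 coef_Suc_0)
  next
    case False
    define \<psi> where "\<psi> = (\<lambda>z. if z = 0 then deriv \<omega> 0 else (\<omega> z - \<omega> 0) / (z - 0))"
    have hol\<psi>: "\<psi> holomorphic_on ball 0 1"
      unfolding \<psi>_def by (rule pole_lemma[OF hol]) auto
    have \<omega>_eq: "\<omega> z = z * \<psi> z" for z
      by (simp add: \<psi>_def \<omega>0)
    have "norm (\<psi> z) < 1" if "z \<in> ball 0 1" for z
    proof (cases "z = 0")
      case True
      have "norm (deriv \<omega> 0) \<noteq> 1"
        using False Schwarz(3)[of 0] by auto
      with True show ?thesis
        using Schwarz(2)[of 0] by (simp add: \<psi>_def)
    next
      case z_ne_0: False
      have "norm (\<omega> z) < norm z"
        using False that z_ne_0 Schwarz(1)[of z] Schwarz(3)[of 0]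
        by (auto simp: order_le_less)
      then show ?thesis
        using z_ne_0 by (simp add: \<psi>_def \<omega>0 norm_divide divide_less_eq)
    qed
    then have Pick: "norm (deriv \<psi> 0) \<le> 1 - norm (\<psi> 0) ^ 2"
      by (rule Schwarz_Pick_deriv_0[OF hol\<psi>])
    have coef_shift: "coef \<omega> (Suc n) = coef \<psi> n" for n
      using hol\<psi> \<omega>_eq by (intro coef_Suc_times_z[of _ 1]) auto
    from coef_shift[of 0] coef_shift[of 1] Pick show ?thesis
      by (simp add: numeral_2_eq_2 coef_0 coef_Suc_0)
  qed
qed

lemma coef_compose_1_2:
  fixes \<phi> \<omega> :: "complex \<Rightarrow> complex"
  assumes "\<phi> analytic_on {0}" "\<omega> analytic_on {0}" "\<omega> 0 = 0"
  shows "coef (\<phi> \<circ> \<omega>) 1 = coef \<phi> 1 * coef \<omega> 1"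
    and "coef (\<phi> \<circ> \<omega>) 2 = coef \<phi> 1 * coef \<omega> 2 + coef \<phi> 2 * coef \<omega> 1 ^ 2"
proof -
  define \<Phi> W where "\<Phi> = fps_expansion \<phi> 0" and "W = fps_expansion \<omega> 0"
  have \<Phi>: "\<phi> has_fps_expansion \<Phi>" and W: "\<omega> has_fps_expansion W"
    using assms by (simp_all add: \<Phi>_def W_def analytic_at_imp_has_fps_expansion_0)
  have W0: "W $ 0 = 0"
    using has_fps_expansion_imp_0_eq_fps_nth_0[OF W] assms(3) by simp
  have "(\<phi> \<circ> \<omega>) has_fps_expansion (\<Phi> oo W)"
    using \<Phi> W W0 by (rule has_fps_expansion_compose)
  then show "coef (\<phi> \<circ> \<omega>) 1 = coef \<phi> 1 * coef \<omega> 1"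
    and "coef (\<phi> \<circ> \<omega>) 2 = coef \<phi> 1 * coef \<omega> 2 + coef \<phi> 2 * coef \<omega> 1 ^ 2"
    by (simp_all add: coef_eq_fps_nth[OF \<Phi>] coef_eq_fps_nth[OF W] coef_eq_fps_nth
        fps_compose_nth fps_mult_nth W0 numeral_2_eq_2 power2_eq_square)
qed

lemma coef_2_3_of_z_deriv_eq:
  fixes f h :: "complex \<Rightarrow> complex"
  assumes "f analytic_on {0}" "h analytic_on {0}" "f 0 = 0" "deriv f 0 = 1"
    and "eventually (\<lambda>z. z * deriv f z = f z * h z) (nhds 0)"
  shows "coef f 2 = coef h 1" and "2 * coef f 3 = coef h 2 + coef h 1 ^ 2"
proof -
  define F H where "F = fps_expansion f 0" and "H = fps_expansion h 0"
  have F: "f has_fps_expansion F" and H: "h has_fps_expansion H"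
    using assms by (simp_all add: F_def H_def analytic_at_imp_has_fps_expansion_0)
  have F0: "F $ 0 = 0" and F1: "F $ Suc 0 = 1"
    using fps_nth_fps_expansion[OF F, of 0] fps_nth_fps_expansion[OF F, of 1] assms(3,4)
    by simp_all
  have "(\<lambda>z. z * deriv f z) has_fps_expansion fps_X * fps_deriv F"
    using F by (intro fps_expansion_intros)
  moreover have "(\<lambda>z. z * deriv f z) has_fps_expansion F * H"
    using has_fps_expansion_mult[OF F H] assms(5)
    by (subst has_fps_expansion_cong[of _ "\<lambda>z. f z * h z"]) (auto elim: eventually_mono)
  ultimately have eq: "fps_X * fps_deriv F = F * H"
    by (rule has_fps_expansion_unique)
  have nth_eq: "(fps_X * fps_deriv F) $ n = (F * H) $ n" for n
    by (simp only: eq)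
  from nth_eq[of 1] have H0: "H $ 0 = 1"
    by (simp add: fps_mult_nth F0 F1)
  from nth_eq[of 2] have F2: "F $ 2 = H $ 1"
    by (simp add: fps_mult_nth F0 F1 H0 numeral_2_eq_2)
  from nth_eq[of 3] have "3 * F $ 3 = H $ 2 + F $ 2 * H $ 1 + F $ 3"
    by (simp add: fps_mult_nth F0 F1 H0 numeral_2_eq_2 numeral_3_eq_3)
  then have F3: "2 * F $ 3 = H $ 2 + (H $ 1) ^ 2"
    unfolding F2 power2_eq_square by (simp add: algebra_simps)
  show "coef f 2 = coef h 1" and "2 * coef f 3 = coef h 2 + coef h 1 ^ 2"
    using F2 F3 by (simp_all only: coef_eq_fps_nth[OF F] coef_eq_fps_nth[OF H])
qed

lemma coef_z_plus_cosh:
  shows "coef (\<lambda>z. z + cosh z) 1 = 1" and "coef (\<lambda>z. z + cosh z) 2 = 1 / 2"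
proof -
  have d1: "deriv (\<lambda>z::complex. z + cosh z) = (\<lambda>z. 1 + sinh z)"
    by (rule ext, rule DERIV_imp_deriv) (auto intro!: derivative_eq_intros)
  have d2: "deriv (\<lambda>z::complex. 1 + sinh z) = cosh"
    by (rule ext, rule DERIV_imp_deriv) (auto intro!: derivative_eq_intros)
  show "coef (\<lambda>z. z + cosh z) 1 = 1" and "coef (\<lambda>z. z + cosh z) 2 = 1 / 2"
    by (simp_all add: coef_def d1 d2 numeral_2_eq_2)
qed

lemma subord_iff_schwarz_function:
  "subord g h \<longleftrightarrow> (\<exists>\<omega>. schwarz_function \<omega> \<and> (\<forall>z\<in>ball 0 1. g z = h (\<omega> z)))"
  by (auto simp: subord_def schwarz_function_def)

lemma z_deriv_eq_of_zdlog_eq: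
  assumes "f 0 = 0" "z \<noteq> 0 \<Longrightarrow> f z \<noteq> 0" "zdlog f z = h z"
  shows "z * deriv f z = f z * h z"
  using assms by (cases "z = 0") (auto simp: zdlog_def field_simps)

lemma exists_classA_zdlog_eq:
  assumes holh: "h holomorphic_on ball 0 1" and h0: "h 0 = 1"
  obtains f where "f \<in> classA" "\<forall>z\<in>ball 0 1. z \<noteq> 0 \<longrightarrow> f z \<noteq> 0"
    "\<forall>z\<in>ball 0 1. zdlog f z = h z"
proof -
  define q where "q = (\<lambda>z. if z = 0 then deriv h 0 else (h z - h 0) / (z - 0))"
  have "q holomorphic_on ball 0 1"
    unfolding q_def by (rule pole_lemma[OF holh]) auto
  then obtain G0 where G0: "\<And>z. z \<in> ball 0 1 \<Longrightarrow> (G0 has_field_derivative q z) (at z within ball 0 1)"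
    using holomorphic_convex_primitive'[OF convex_ball open_ball] by blast
  define G where "G = (\<lambda>z. G0 z - G0 0)"
  have G: "(G has_field_derivative q z) (at z)" if "z \<in> ball 0 1" for z
    using G0[OF that] that unfolding G_def
    by (auto simp: at_within_open[OF _ open_ball] intro!: derivative_eq_intros)
  have h_eq: "h z = 1 + z * q z" for z
    by (cases "z = 0") (simp_all add: q_def h0)
  define f where "f = (\<lambda>z. z * exp (G z))"
  have df: "(f has_field_derivative exp (G z) * h z) (at z)" if "z \<in> ball 0 1" for z
    unfolding f_def h_eq using G[OF that]
    by (auto intro!: derivative_eq_intros simp: algebra_simps)
  then have "f holomorphic_on ball 0 1"
    using holomorphic_on_open[OF open_ball] by blast
  moreover have "deriv f z = exp (G z) * h z" if "z \<in> ball 0 1" for z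
    using df[OF that] by (rule DERIV_imp_deriv)
  ultimately show thesis
    using h0 by (intro that) (auto simp: classA_def zdlog_def f_def G_def)
qed

lemma Gamma_eq_schwarz_coef:
  assumes f: "f \<in> classA" "\<forall>z\<in>ball 0 1. z \<noteq> 0 \<longrightarrow> f z \<noteq> 0"
    and \<omega>: "schwarz_function \<omega>" "\<forall>z\<in>ball 0 1. zdlog f z = \<omega> z + cosh (\<omega> z)"
  shows "Gamma1 f = - coef \<omega> 1 / 2"
    and "Gamma2 f = (3 * coef \<omega> 1 ^ 2 - 2 * coef \<omega> 2) / 8"
proof -
  define \<phi> :: "complex \<Rightarrow> complex" where "\<phi> = (\<lambda>z. z + cosh z)"
  have "f analytic_on ball 0 1" "\<omega> analytic_on ball 0 1"
    using f \<omega> by (simp_all add: classA_def schwarz_function_def analytic_on_open)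
  moreover from this(2) have "(\<phi> \<circ> \<omega>) analytic_on ball 0 1"
    unfolding \<phi>_def o_def by (intro analytic_intros)
  moreover have "\<phi> analytic_on UNIV"
    unfolding \<phi>_def by (intro analytic_intros)
  ultimately have ana: "f analytic_on {0}" "\<omega> analytic_on {0}" "(\<phi> \<circ> \<omega>) analytic_on {0}"
    "\<phi> analytic_on {0}"
    by (auto elim!: analytic_on_subset)
  have "eventually (\<lambda>z. z \<in> ball 0 1) (nhds (0::complex))"
    by (intro eventually_nhds_in_open) auto
  then have "eventually (\<lambda>z. z * deriv f z = f z * (\<phi> \<circ> \<omega>) z) (nhds 0)"
    by (rule eventually_mono)
      (use f \<omega> in \<open>auto intro!: z_deriv_eq_of_zdlog_eq simp: classA_def \<phi>_def\<close>)
  moreover have "f 0 = 0" "deriv f 0 = 1"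
    using f by (simp_all add: classA_def)
  ultimately have coef_f: "coef f 2 = coef (\<phi> \<circ> \<omega>) 1"
    "2 * coef f 3 = coef (\<phi> \<circ> \<omega>) 2 + coef (\<phi> \<circ> \<omega>) 1 ^ 2"
    using coef_2_3_of_z_deriv_eq[OF ana(1,3)] by (simp_all only: o_def)
  have "\<omega> 0 = 0"
    using \<omega> by (simp add: schwarz_function_def)
  then have coef_comp: "coef (\<phi> \<circ> \<omega>) 1 = coef \<omega> 1" "coef (\<phi> \<circ> \<omega>) 2 = coef \<omega> 2 + coef \<omega> 1 ^ 2 / 2"
    using coef_compose_1_2[OF ana(4,2)] unfolding \<phi>_def coef_z_plus_cosh by simp_all
  show "Gamma1 f = - coef \<omega> 1 / 2"
    using coef_f(1) coef_comp(1) by (simp add: Gamma1_def)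
  have "coef f 3 = coef \<omega> 2 / 2 + 3 / 4 * coef \<omega> 1 ^ 2"
    using coef_f(2) coef_comp by (simp add: field_simps)
  then show "Gamma2 f = (3 * coef \<omega> 1 ^ 2 - 2 * coef \<omega> 2) / 8"
    using coef_f(1) coef_comp(1) by (simp add: Gamma2_def algebra_simps)
qed

lemma Sch_Gamma_eq_schwarz_coef:
  assumes "f \<in> Sch"
  obtains \<omega> where "schwarz_function \<omega>" "Gamma1 f = - coef \<omega> 1 / 2"
    "Gamma2 f = (3 * coef \<omega> 1 ^ 2 - 2 * coef \<omega> 2) / 8"
  using assms Gamma_eq_schwarz_coef unfolding Sch_def subord_iff_schwarz_function by blast

lemma Sch_exists_Gamma_eq_schwarz_coef:
  assumes "schwarz_function \<omega>"
  obtains f where "f \<in> Sch" "Gamma1 f = - coef \<omega> 1 / 2"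
    "Gamma2 f = (3 * coef \<omega> 1 ^ 2 - 2 * coef \<omega> 2) / 8"
proof -
  have "\<omega> analytic_on ball 0 1"
    using assms by (simp add: schwarz_function_def analytic_on_open)
  then have "(\<lambda>z. \<omega> z + cosh (\<omega> z)) analytic_on ball 0 1"
    by (intro analytic_intros)
  moreover have "\<omega> 0 = 0"
    using assms by (simp add: schwarz_function_def)
  ultimately obtain f where "f \<in> classA" "\<forall>z\<in>ball 0 1. z \<noteq> 0 \<longrightarrow> f z \<noteq> 0"
    "\<forall>z\<in>ball 0 1. zdlog f z = \<omega> z + cosh (\<omega> z)"
    using exists_classA_zdlog_eq[of "\<lambda>z. \<omega> z + cosh (\<omega> z)"] analytic_imp_holomorphic by auto
  with assms show thesis
    using Gamma_eq_schwarz_coef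
    by (intro that[of f]) (auto simp: Sch_def subord_iff_schwarz_function)
qed

lemma schwarz_function_z_power2:
  shows "schwarz_function (\<lambda>z. z ^ 2)" "coef (\<lambda>z. z ^ 2) 1 = 0" "coef (\<lambda>z. z ^ 2) 2 = 1"
proof -
  show "schwarz_function (\<lambda>z. z ^ 2)"
    by (auto simp: schwarz_function_def norm_power power_less_one_iff intro!: holomorphic_intros)
  have "coef (\<lambda>z. z ^ 2) (Suc n) = coef (\<lambda>z. z) n" for n
    by (rule coef_Suc_times_z[of _ 1]) (auto simp: power2_eq_square)
  from this[of 0] this[of 1] show "coef (\<lambda>z. z ^ 2) 1 = 0" "coef (\<lambda>z. z ^ 2) 2 = 1"
    by (simp_all add: numeral_2_eq_2 coef_0 coef_Suc_0)
qed

lemma schwarz_function_z_times_Moebius: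
  assumes "norm a < 1"
  defines "\<omega> \<equiv> \<lambda>z. z * Moebius_function 0 (- a) z"
  shows "schwarz_function \<omega>" "coef \<omega> 1 = a" "coef \<omega> 2 = 1 - a * cnj a"
proof -
  have hol: "Moebius_function 0 (- a) holomorphic_on ball 0 1"
    using assms by (intro Moebius_function_holomorphic) simp
  have "norm (\<omega> z) < 1" if "norm z < 1" for z
    using norm_mult_less[OF that Moebius_function_norm_lt_1[of "- a" z 0]] assms that
    by (simp add: \<omega>_def)
  then show "schwarz_function \<omega>"
    using hol by (auto simp: schwarz_function_def \<omega>_def intro!: holomorphic_intros)
  have "(Moebius_function 0 (- a) has_field_derivative 1 - a * cnj a) (at 0)"
    unfolding Moebius_function_simple
    by (auto intro!: derivative_eq_intros simp: fun_eq_iff algebra_simps)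
  then have deriv_0: "deriv (Moebius_function 0 (- a)) 0 = 1 - a * cnj a"
    by (rule DERIV_imp_deriv)
  have coef_shift: "coef \<omega> (Suc n) = coef (Moebius_function 0 (- a)) n" for n
    using hol by (rule coef_Suc_times_z[of _ 1]) (simp_all add: \<omega>_def)
  from coef_shift[of 0] coef_shift[of 1] deriv_0 show "coef \<omega> 1 = a" "coef \<omega> 2 = 1 - a * cnj a"
    by (simp_all add: numeral_2_eq_2 coef_0 coef_Suc_0 Moebius_function_of_zero)
qed

lemma Gamma_functional_bounds:
  fixes c1 c2 :: complex
  assumes c2_le: "norm c2 \<le> 1 - norm c1 ^ 2"
  shows "- 1 / sqrt 10 \<le> norm ((3 * c1 ^ 2 - 2 * c2) / 8) - norm (- c1 / 2)"
    and "norm ((3 * c1 ^ 2 - 2 * c2) / 8) - norm (- c1 / 2) \<le> 1 / 4"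
proof -
  define x N where "x = norm c1" and "N = norm (3 * c1 ^ 2 - 2 * c2) / 8"
  have x_ge_0: "x \<ge> 0"
    by (simp add: x_def)
  have "x ^ 2 \<le> 1"
    unfolding x_def using c2_le norm_ge_zero[of c2] by linarith
  then have x_le_1: "x \<le> 1"
    using x_ge_0 by (simp add: abs_square_le_1)
  have norm_c1_sq: "norm (3 * c1 ^ 2) = 3 * x ^ 2"
    by (simp add: x_def norm_mult norm_power)
  have "norm (2 * c2) = 2 * norm c2"
    by (simp add: norm_mult)
  then have N_le: "8 * N \<le> 3 * x ^ 2 + 2 * norm c2"
    using norm_triangle_ineq4[of "3 * c1 ^ 2" "2 * c2"] unfolding N_def norm_c1_sq by simp
  from \<open>norm (2 * c2) = 2 * norm c2\<close> have N_ge: "8 * N \<ge> 3 * x ^ 2 - 2 * norm c2"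
    using norm_triangle_ineq2[of "3 * c1 ^ 2" "2 * c2"] unfolding N_def norm_c1_sq by simp
  have lhs_eq: "norm ((3 * c1 ^ 2 - 2 * c2) / 8) - norm (- c1 / 2) = N - x / 2"
    by (simp add: N_def x_def norm_divide)
  have "x ^ 2 \<le> x"
    using x_ge_0 x_le_1 by (simp add: power2_eq_square mult_left_le_one_le)
  have c2_le': "norm c2 \<le> 1 - x ^ 2"
    using c2_le by (simp add: x_def)
  show "norm ((3 * c1 ^ 2 - 2 * c2) / 8) - norm (- c1 / 2) \<le> 1 / 4"
    unfolding lhs_eq using N_le c2_le' x_ge_0 \<open>x ^ 2 \<le> x\<close> by linarith
  define s where "s = 1 / sqrt 10"
  have s_sq: "s ^ 2 = 1 / 10"
    by (simp add: s_def power_divide)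
  have "sqrt 10 < 5"
    by (rule real_less_lsqrt) auto
  then have s_gt: "s > 1 / 5"
    by (simp add: s_def field_simps)
  have "- s \<le> N - x / 2"
  proof (cases "x \<le> 2 * s")
    case True
    moreover have "N \<ge> 0"
      by (simp add: N_def)
    ultimately show ?thesis
      by linarith
  next
    case False
    \<comment> \<open>The lower estimates \<open>N \<ge> 0\<close> and \<open>N_ge\<close> cross at \<open>x = 2 s\<close>; this factors the second one.\<close>
    have "0 \<le> 5 / 8 * ((x - 2 * s) * (x - 4 / 5 + 2 * s))"
      using False s_gt by (intro mult_nonneg_nonneg) auto
    also have "\<dots> = 5 / 8 * x ^ 2 - x / 2 - 1 / 4 + s"
      by (simp add: field_simps power2_eq_square s_sq[unfolded power2_eq_square])
    finally show ?thesis
      using N_ge c2_le' by linarith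
  qed
  then show "- 1 / sqrt 10 \<le> norm ((3 * c1 ^ 2 - 2 * c2) / 8) - norm (- c1 / 2)"
    unfolding lhs_eq by (simp add: s_def)
qed

lemma Sch_attains_upper_bound: "\<exists>f\<in>Sch. norm (Gamma2 f) - norm (Gamma1 f) = 1 / 4"
proof -
  obtain f where "f \<in> Sch" "Gamma1 f = 0" "Gamma2 f = - 1 / 4"
    using Sch_exists_Gamma_eq_schwarz_coef[OF schwarz_function_z_power2(1)]
    unfolding schwarz_function_z_power2(2,3) by auto
  then show ?thesis
    by (intro bexI[of _ f]) auto
qed

lemma Sch_attains_lower_bound: "\<exists>f\<in>Sch. norm (Gamma2 f) - norm (Gamma1 f) = - 1 / sqrt 10"
proof -
  \<comment> \<open>At \<open>|c\<^sub>1| = sqrt (2/5)\<close> with \<open>|c\<^sub>2| = 1 - |c\<^sub>1|\<^sup>2\<close> one has \<open>3c\<^sub>1\<^sup>2 = 2c\<^sub>2\<close>, so \<open>\<Gamma>\<^sub>2\<close> vanishes.\<close>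
  define a where "a = complex_of_real (sqrt (2 / 5))"
  have "norm a < 1"
    by (simp add: a_def)
  note \<omega> = schwarz_function_z_times_Moebius[OF this]
  obtain f where f: "f \<in> Sch" "Gamma1 f = - a / 2" "Gamma2 f = (3 * a ^ 2 - 2 * (1 - a * cnj a)) / 8"
    using Sch_exists_Gamma_eq_schwarz_coef[OF \<omega>(1)] unfolding \<omega>(2,3) .
  have a_sq: "a * cnj a = 2 / 5" "a ^ 2 = 2 / 5"
    by (simp_all add: a_def power2_eq_square flip: of_real_mult)
  have "Gamma2 f = 0"
    unfolding f(3) a_sq by simp
  have "sqrt (2 / 5) = sqrt (4 / 10)"
    by simp
  also have "\<dots> = sqrt 4 / sqrt 10"
    by (rule real_sqrt_divide)
  also have "sqrt 4 = 2"
    using real_sqrt_abs[of 2] by simp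
  finally have "norm (Gamma1 f) = 1 / sqrt 10"
    by (simp add: f(2) a_def norm_divide)
  with f(1) \<open>Gamma2 f = 0\<close> show ?thesis
    by (intro bexI[of _ f]) simp_all
qed

theorem theorem4p2:
  shows "(\<forall>f\<in>Sch. - 1 / sqrt 10 \<le> norm (Gamma2 f) - norm (Gamma1 f) \<and>
                     norm (Gamma2 f) - norm (Gamma1 f) \<le> 1 / 4)
       \<and> (\<exists>f\<in>Sch. norm (Gamma2 f) - norm (Gamma1 f) = - 1 / sqrt 10)
       \<and> (\<exists>f\<in>Sch. norm (Gamma2 f) - norm (Gamma1 f) = 1 / 4)"
proof (intro conjI ballI Sch_attains_lower_bound Sch_attains_upper_bound)
  fix f
  assume "f \<in> Sch"
  then obtain \<omega> where \<omega>: "schwarz_function \<omega>" and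
    Gamma_eq: "Gamma1 f = - coef \<omega> 1 / 2" "Gamma2 f = (3 * coef \<omega> 1 ^ 2 - 2 * coef \<omega> 2) / 8"
    by (rule Sch_Gamma_eq_schwarz_coef)
  note bounds = Gamma_functional_bounds[OF schwarz_function_coef_2_bound[OF \<omega>]]
  show "- 1 / sqrt 10 \<le> norm (Gamma2 f) - norm (Gamma1 f)"
    and "norm (Gamma2 f) - norm (Gamma1 f) \<le> 1 / 4"
    using bounds unfolding Gamma_eq by simp_all
qed

end
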